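(* (Working in $\mathbf{ZFC}$.) Let $X$ be an infinite set of cardinality $\kappa$. Then there are exactly $2^{2^{\kappa}}$ weakly normal small generalized topologies in $X$ that induce the discrete topology of $X$.
   Context: A generalized topology in a set $X$ is a collection $\mathrm{Cov}$ of families of subsets of $X$ such that, with $\mathrm{Op}=\bigcup\mathrm{Cov}$, the triple $(X,\mathrm{Op},\mathrm{Cov})$ is a generalized topological space in the sense of Delfs–Knebusch ($\mathrm{Op}$ contains $\emptyset,X$ and is closed under finite unions and intersections; $\mathrm{Cov}$ satisfies the Delfs–Knebusch axioms for admissible coverings). It induces the topology generated by $\mathrm{Op}$. It is small if $\mathrm{Cov}$ is exactly the set of essentially finite subfamilies of $\mathrm{Op}$ (a family is essentially finite if some finite subfamily has the same union). It is weakly normal if for any two disjoint subsets $A_1,A_2$ of $X$, each a singleton or the complement of a member of $\mathrm{Op}$, there are disjoint $W_1,W_2\in\mathrm{Op}$ with $A_i\subseteq W_i$. *)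

theory Defs
  imports "HOL-Analysis.Analysis" "HOL-Library.Equipollence"
begin

definition gt_Op :: "'a set set set \<Rightarrow> 'a set set" where
  "gt_Op Cov = \<Union>Cov"

definition fam_inter :: "'a set set \<Rightarrow> 'a set \<Rightarrow> 'a set set" where
  "fam_inter \<U> V = (\<lambda>U. U \<inter> V) ` \<U>"

text \<open>Generalized topological space (Delfs--Knebusch axioms, in the set-family
  formulation): X with open sets Op and admissible coverings Cov.\<close>
definition gts :: "'a set \<Rightarrow> 'a set set \<Rightarrow> 'a set set set \<Rightarrow> bool" where
  "gts X Op Cov \<longleftrightarrow>
     Op \<subseteq> Pow X \<and> Cov \<subseteq> Pow Op \<and>
     {} \<in> Op \<and> X \<in> Op \<and>
     (\<forall>U\<in>Op. \<forall>V\<in>Op. U \<union> V \<in> Op \<and> U \<inter> V \<in> Op) \<and>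
     (\<forall>\<U>. \<U> \<subseteq> Op \<and> finite \<U> \<longrightarrow> \<U> \<in> Cov) \<and>
     (\<forall>\<U>\<in>Cov. \<Union>\<U> \<in> Op) \<and>
     (\<forall>\<U>\<in>Cov. \<forall>V\<in>Op. V \<subseteq> \<Union>\<U> \<longrightarrow> fam_inter \<U> V \<in> Cov) \<and>
     (\<forall>\<U>\<in>Cov. \<forall>f. (\<forall>U\<in>\<U>. f U \<in> Cov \<and> \<Union>(f U) = U) \<longrightarrow> (\<Union>U\<in>\<U>. f U) \<in> Cov) \<and>
     (\<forall>\<U>\<in>Cov. \<forall>\<V>. \<V> \<subseteq> Op \<and> \<Union>\<V> = \<Union>\<U> \<and> (\<forall>U\<in>\<U>. \<exists>V\<in>\<V>. U \<subseteq> V)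
         \<longrightarrow> \<V> \<in> Cov) \<and>
     (\<forall>\<U> \<V>. \<U> \<subseteq> Op \<and> \<V> \<in> Cov \<and> \<Union>\<V> = \<Union>\<U> \<and> (\<forall>V\<in>\<V>. fam_inter \<U> V \<in> Cov)
         \<longrightarrow> \<U> \<in> Cov)"

definition generalized_topology :: "'a set \<Rightarrow> 'a set set set \<Rightarrow> bool" where
  "generalized_topology X Cov \<longleftrightarrow> gts X (gt_Op Cov) Cov"

definition essentially_finite :: "'a set set \<Rightarrow> bool" where
  "essentially_finite \<U> \<longleftrightarrow> (\<exists>\<F>\<subseteq>\<U>. finite \<F> \<and> \<Union>\<F> = \<Union>\<U>)"

definition small_gt :: "'a set set set \<Rightarrow> bool" where
  "small_gt Cov \<longleftrightarrow> Cov = {\<U>. \<U> \<subseteq> gt_Op Cov \<and> essentially_finite \<U>}"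

definition weakly_normal_gt :: "'a set \<Rightarrow> 'a set set set \<Rightarrow> bool" where
  "weakly_normal_gt X Cov \<longleftrightarrow>
     (\<forall>A1 A2. (\<exists>x\<in>X. A1 = {x}) \<or> (\<exists>U\<in>gt_Op Cov. A1 = X - U) \<longrightarrow>
              (\<exists>x\<in>X. A2 = {x}) \<or> (\<exists>U\<in>gt_Op Cov. A2 = X - U) \<longrightarrow>
              A1 \<inter> A2 = {} \<longrightarrow>
              (\<exists>W1\<in>gt_Op Cov. \<exists>W2\<in>gt_Op Cov. W1 \<inter> W2 = {} \<and> A1 \<subseteq> W1 \<and> A2 \<subseteq> W2))"

definition induced_topology :: "'a set set set \<Rightarrow> 'a topology" where
  "induced_topology Cov = topology_generated_by (gt_Op Cov)"

end

theory Submission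
  imports Defs "HOL-Algebra.Free_Abelian_Groups"
begin

text \<open>A small generalized topology is determined by its open sets, so there are at most
  \<open>2^2^\<kappa>\<close> of them. Conversely, fix an injection \<open>h\<close> into \<open>X\<close> of the \<open>\<kappa>\<close> traces \<open>(F, \<F>)\<close>
  with \<open>F \<subseteq> X\<close> finite and \<open>\<F> \<subseteq> Pow F\<close>; a set \<open>A\<close> satisfies the trace if \<open>A \<inter> F \<in> \<F>\<close>.
  Given \<open>\<S> \<subseteq> Pow X\<close>, call \<open>C \<subseteq> X\<close> open if, up to finitely many traces \<open>y\<close>, whether
  \<open>h y \<in> C\<close> depends only on which members of a finite \<open>T \<subseteq> \<S>\<close> satisfy \<open>y\<close>. These sets form
  a Boolean algebra containing the singletons, so the small generalized topology they carry
  is weakly normal and induces the discrete topology. The image under \<open>h\<close> of the traces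
  satisfied by \<open>A\<close> is open iff \<open>A \<in> \<S>\<close>: for \<open>A \<notin> \<S>\<close> and finite \<open>T \<subseteq> \<S>\<close>, a fresh finite \<open>F\<close>
  meeting each \<open>(A - B) \<union> (B - A)\<close>, \<open>B \<in> T\<close>, carries two traces that no member of \<open>T\<close> distinguishes but \<open>A\<close>
  does. Hence \<open>\<S>\<close> can be recovered, giving \<open>2^2^\<kappa>\<close> distinct topologies.\<close>

lemma essentially_finiteI:
  assumes "\<F> \<subseteq> \<U>" "finite \<F>" "\<Union>\<U> \<subseteq> \<Union>\<F>"
  shows "essentially_finite \<U>"
  unfolding essentially_finite_def
proof (intro exI[of _ \<F>] conjI)
  show "\<Union>\<F> = \<Union>\<U>" using Union_mono[OF assms(1)] assms(3) by (rule equalityI)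
qed (use assms in auto)

lemma essentially_finiteE:
  assumes "essentially_finite \<U>"
  obtains \<F> where "\<F> \<subseteq> \<U>" "finite \<F>" "\<Union>\<U> \<subseteq> \<Union>\<F>"
  using assms unfolding essentially_finite_def by (metis order_refl)

lemma essentially_finite_if_finite: "finite \<U> \<Longrightarrow> essentially_finite \<U>"
  unfolding essentially_finite_def by (intro exI[of _ \<U>]) simp

lemma Union_mem_if_essentially_finite:
  assumes "essentially_finite \<U>" "\<U> \<subseteq> Op" "{} \<in> Op"
    and "\<And>U V. U \<in> Op \<Longrightarrow> V \<in> Op \<Longrightarrow> U \<union> V \<in> Op"
  shows "\<Union>\<U> \<in> Op"
proof -
  obtain \<F> where \<F>: "\<F> \<subseteq> \<U>" "finite \<F>" "\<Union>\<F> = \<Union>\<U>"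
    using assms(1) unfolding essentially_finite_def by (elim exE conjE)
  from \<open>finite \<F>\<close> have "\<F> \<subseteq> Op \<Longrightarrow> \<Union>\<F> \<in> Op"
    by (induction rule: finite_induct) (simp_all add: assms(3,4))
  then show ?thesis using \<F> assms(2) by simp
qed

lemma essentially_finite_fam_inter:
  assumes "essentially_finite \<U>"
  shows "essentially_finite (fam_inter \<U> V)"
proof -
  obtain \<F> where "\<F> \<subseteq> \<U>" "finite \<F>" "\<Union>\<U> \<subseteq> \<Union>\<F>"
    using assms by (rule essentially_finiteE)
  then show ?thesis
    unfolding fam_inter_def by (intro essentially_finiteI[of "(\<lambda>U. U \<inter> V) ` \<F>"]) auto
qed

lemma essentially_finite_UN:
  assumes "essentially_finite \<U>"
    and "\<And>U. U \<in> \<U> \<Longrightarrow> essentially_finite (f U) \<and> \<Union>(f U) = U"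
  shows "essentially_finite (\<Union>U\<in>\<U>. f U)"
proof -
  obtain \<F> where \<F>: "\<F> \<subseteq> \<U>" "finite \<F>" "\<Union>\<U> \<subseteq> \<Union>\<F>"
    using assms(1) by (rule essentially_finiteE)
  have "\<exists>\<G>. \<G> \<subseteq> f U \<and> finite \<G> \<and> U \<subseteq> \<Union>\<G>" if U: "U \<in> \<U>" for U
  proof -
    have "essentially_finite (f U)" "\<Union>(f U) = U" using assms(2)[OF U] by auto
    moreover obtain \<G> where "\<G> \<subseteq> f U" "finite \<G>" "\<Union>(f U) \<subseteq> \<Union>\<G>"
      using calculation(1) by (rule essentially_finiteE)
    ultimately show ?thesis by auto
  qed
  then obtain \<G> where \<G>: "\<And>U. U \<in> \<U> \<Longrightarrow> \<G> U \<subseteq> f U \<and> finite (\<G> U) \<and> U \<subseteq> \<Union>(\<G> U)"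
    by metis
  show ?thesis
  proof (rule essentially_finiteI)
    show "(\<Union>U\<in>\<F>. \<G> U) \<subseteq> (\<Union>U\<in>\<U>. f U)"
      using \<G> \<F>(1) by (intro UN_mono) auto
    show "finite (\<Union>U\<in>\<F>. \<G> U)" using \<G> \<F>(1,2) by (intro finite_UN_I) auto
    have "\<Union>(\<Union>U\<in>\<U>. f U) = (\<Union>U\<in>\<U>. \<Union>(f U))" by blast
    also have "\<dots> = \<Union>\<U>" using assms(2) by simp
    also have "\<dots> \<subseteq> (\<Union>U\<in>\<F>. \<Union>(\<G> U))"
      using \<F>(3)
    proof (rule subset_trans)
      show "\<Union>\<F> \<subseteq> (\<Union>U\<in>\<F>. \<Union>(\<G> U))"
        using \<G> \<F>(1) by (intro Union_least) (meson UN_upper subset_iff subset_trans)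
    qed
    also have "\<dots> = \<Union>(\<Union>U\<in>\<F>. \<G> U)" by blast
    finally show "\<Union>(\<Union>U\<in>\<U>. f U) \<subseteq> \<Union>(\<Union>U\<in>\<F>. \<G> U)" .
  qed
qed

lemma essentially_finite_coarsening:
  assumes "essentially_finite \<U>" "\<Union>\<V> \<subseteq> \<Union>\<U>" "\<forall>U\<in>\<U>. \<exists>V\<in>\<V>. U \<subseteq> V"
  shows "essentially_finite \<V>"
proof -
  obtain \<F> where \<F>: "\<F> \<subseteq> \<U>" "finite \<F>" "\<Union>\<U> \<subseteq> \<Union>\<F>"
    using assms(1) by (rule essentially_finiteE)
  obtain c where c: "\<And>U. U \<in> \<U> \<Longrightarrow> c U \<in> \<V> \<and> U \<subseteq> c U"
    using assms(3) by metis
  show ?thesis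
  proof (rule essentially_finiteI)
    show "c ` \<F> \<subseteq> \<V>" "finite (c ` \<F>)" using c \<F>(1,2) by auto
    have "\<Union>\<F> \<subseteq> \<Union>(c ` \<F>)"
      using c \<F>(1) by (intro Union_least) (meson UN_upper subset_iff subset_trans)
    then show "\<Union>\<V> \<subseteq> \<Union>(c ` \<F>)" using assms(2) \<F>(3) by (meson subset_trans)
  qed
qed

lemma essentially_finite_local:
  assumes "essentially_finite \<V>" "\<Union>\<V> = \<Union>\<U>"
    and "\<And>V. V \<in> \<V> \<Longrightarrow> essentially_finite (fam_inter \<U> V)"
  shows "essentially_finite \<U>"
proof -
  obtain \<F> where \<F>: "\<F> \<subseteq> \<V>" "finite \<F>" "\<Union>\<V> \<subseteq> \<Union>\<F>"
    using assms(1) by (rule essentially_finiteE)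
  have "\<exists>\<H>. \<H> \<subseteq> \<U> \<and> finite \<H> \<and> V \<subseteq> \<Union>\<H>" if V: "V \<in> \<F>" for V
  proof -
    have "essentially_finite ((\<lambda>U. U \<inter> V) ` \<U>)"
      using assms(3)[of V] V \<F>(1) unfolding fam_inter_def by auto
    then obtain \<G> where \<G>: "\<G> \<subseteq> (\<lambda>U. U \<inter> V) ` \<U>" "finite \<G>" "\<Union>((\<lambda>U. U \<inter> V) ` \<U>) \<subseteq> \<Union>\<G>"
      by (rule essentially_finiteE)
    obtain \<H> where \<H>: "\<H> \<subseteq> \<U>" "finite \<H>" "\<G> = (\<lambda>U. U \<inter> V) ` \<H>"
      using finite_subset_image[OF \<G>(2,1)] by (elim exE conjE)
    have "V \<subseteq> \<Union>\<U>" using V \<F>(1) assms(2) by auto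
    then have "V \<subseteq> \<Union>\<G>" using \<G>(3) by auto
    then have "V \<subseteq> \<Union>\<H>" unfolding \<H>(3) by auto
    then show ?thesis using \<H>(1,2) by auto
  qed
  then obtain \<H> where \<H>: "\<And>V. V \<in> \<F> \<Longrightarrow> \<H> V \<subseteq> \<U> \<and> finite (\<H> V) \<and> V \<subseteq> \<Union>(\<H> V)"
    by metis
  show ?thesis
  proof (rule essentially_finiteI)
    show "(\<Union>V\<in>\<F>. \<H> V) \<subseteq> \<U>" using \<H> by auto
    show "finite (\<Union>V\<in>\<F>. \<H> V)" using \<H> \<F>(2) by (intro finite_UN_I) auto
    have "\<Union>\<F> \<subseteq> \<Union>(\<Union>V\<in>\<F>. \<H> V)"
      using \<H> by (intro Union_least) (meson UN_upper Union_mono subset_trans)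
    with \<F>(3) show "\<Union>\<U> \<subseteq> \<Union>(\<Union>V\<in>\<F>. \<H> V)"
      unfolding assms(2) by (rule subset_trans)
  qed
qed

definition essentially_finite_covers :: "'a set set \<Rightarrow> 'a set set set" where
  "essentially_finite_covers Op = {\<U>. \<U> \<subseteq> Op \<and> essentially_finite \<U>}"

lemma gt_Op_essentially_finite_covers: "gt_Op (essentially_finite_covers Op) = Op"
  unfolding gt_Op_def essentially_finite_covers_def
  using essentially_finite_if_finite[of "{_}"] by blast

lemma small_gt_essentially_finite_covers: "small_gt (essentially_finite_covers Op)"
  unfolding small_gt_def gt_Op_essentially_finite_covers
  by (simp add: essentially_finite_covers_def)

lemma generalized_topology_essentially_finite_covers:
  assumes "Op \<subseteq> Pow X" "{} \<in> Op" "X \<in> Op"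
    and "\<And>U V. U \<in> Op \<Longrightarrow> V \<in> Op \<Longrightarrow> U \<union> V \<in> Op \<and> U \<inter> V \<in> Op"
  shows "generalized_topology X (essentially_finite_covers Op)"
  unfolding generalized_topology_def gts_def gt_Op_essentially_finite_covers
proof (intro conjI)
  let ?Cov = "essentially_finite_covers Op"
  have mem: "\<U> \<in> ?Cov \<longleftrightarrow> \<U> \<subseteq> Op \<and> essentially_finite \<U>" for \<U>
    unfolding essentially_finite_covers_def by simp
  show "\<forall>\<U>\<in>?Cov. \<Union>\<U> \<in> Op"
    using Union_mem_if_essentially_finite[of _ Op] assms(2,4) by (auto simp: mem)
  show "\<forall>\<U>\<in>?Cov. \<forall>V\<in>Op. V \<subseteq> \<Union>\<U> \<longrightarrow> fam_inter \<U> V \<in> ?Cov"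
    using assms(4) essentially_finite_fam_inter by (fastforce simp: mem fam_inter_def)
  show "\<forall>\<U>\<in>?Cov. \<forall>f. (\<forall>U\<in>\<U>. f U \<in> ?Cov \<and> \<Union>(f U) = U) \<longrightarrow> (\<Union>U\<in>\<U>. f U) \<in> ?Cov"
    using essentially_finite_UN by (fastforce simp: mem)
  show "\<forall>\<U>\<in>?Cov. \<forall>\<V>. \<V> \<subseteq> Op \<and> \<Union>\<V> = \<Union>\<U> \<and> (\<forall>U\<in>\<U>. \<exists>V\<in>\<V>. U \<subseteq> V) \<longrightarrow> \<V> \<in> ?Cov"
    using essentially_finite_coarsening by (fastforce simp: mem)
  show "\<forall>\<U> \<V>. \<U> \<subseteq> Op \<and> \<V> \<in> ?Cov \<and> \<Union>\<V> = \<Union>\<U> \<and> (\<forall>V\<in>\<V>. fam_inter \<U> V \<in> ?Cov)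
         \<longrightarrow> \<U> \<in> ?Cov"
    using essentially_finite_local by (fastforce simp: mem)
qed (use assms in \<open>auto simp: essentially_finite_covers_def essentially_finite_if_finite\<close>)

lemma weakly_normal_gt_if_open_singletons_and_complements:
  assumes "\<And>x. x \<in> X \<Longrightarrow> {x} \<in> gt_Op Cov" "\<And>U. U \<in> gt_Op Cov \<Longrightarrow> X - U \<in> gt_Op Cov"
  shows "weakly_normal_gt X Cov"
  unfolding weakly_normal_gt_def using assms by blast

lemma topology_generated_by_singletons:
  assumes "Op \<subseteq> Pow X" "X \<in> Op" "\<And>x. x \<in> X \<Longrightarrow> {x} \<in> Op"
  shows "topology_generated_by Op = discrete_topology X"
  unfolding topology_eq
proof (intro allI iffI)
  fix S assume "openin (topology_generated_by Op) S"
  then show "openin (discrete_topology X) S"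
    using openin_subset assms(1,2) by fastforce
next
  fix S assume "openin (discrete_topology X) S"
  then have "generate_topology_on Op (\<Union>x\<in>S. {x})"
    using assms(3) by (intro generate_topology_on.UN) (auto intro: generate_topology_on.Basis)
  then have "generate_topology_on Op S" by simp
  then show "openin (topology_generated_by Op) S"
    by (simp add: openin_topology_generated_by_iff)
qed

lemma small_generalized_topologies_lepoll:
  "{Cov. generalized_topology X Cov \<and> small_gt Cov} \<lesssim> Pow (Pow X)"
  unfolding lepoll_def
proof (intro exI conjI)
  show "inj_on gt_Op {Cov. generalized_topology X Cov \<and> small_gt Cov}"
    unfolding small_gt_def by (rule inj_onI) auto
  show "gt_Op ` {Cov. generalized_topology X Cov \<and> small_gt Cov} \<subseteq> Pow (Pow X)"
    unfolding generalized_topology_def gts_def by auto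
qed

definition traces :: "'a set \<Rightarrow> ('a set \<times> 'a set set) set" where
  "traces X = {(F, \<F>). finite F \<and> F \<subseteq> X \<and> \<F> \<subseteq> Pow F}"

definition trace_mem :: "'a set \<Rightarrow> 'a set \<times> 'a set set \<Rightarrow> bool" where
  "trace_mem A y \<longleftrightarrow> A \<inter> fst y \<in> snd y"

lemma traces_lepoll:
  assumes "infinite X"
  shows "traces X \<lesssim> X"
proof -
  have "traces X \<subseteq> Fpow X \<times> Fpow (Fpow X)"
    unfolding traces_def Fpow_def by (auto intro: finite_subset)
  then have "traces X \<lesssim> Fpow X \<times> Fpow (Fpow X)"
    by (rule subset_imp_lepoll)
  also have "\<dots> \<approx> X \<times> X"
  proof (rule times_eqpoll_cong)
    show FX: "Fpow X \<approx> X" using assms by (rule eqpoll_Fpow)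
    then have "infinite (Fpow X)" using assms eqpoll_finite_iff by blast
    then show "Fpow (Fpow X) \<approx> X" using FX by (metis eqpoll_Fpow eqpoll_trans)
  qed
  also have "\<dots> \<approx> X"
    using assms card_of_Times_same_infinite eqpoll_iff_card_of_ordIso by blast
  finally show ?thesis .
qed

lemma finite_superset_avoiding:
  assumes "infinite X" "finite \<E>" "finite F\<^sub>0" "F\<^sub>0 \<subseteq> X"
  obtains F where "finite F" "F\<^sub>0 \<subseteq> F" "F \<subseteq> X" "F \<notin> \<E>"
proof -
  have "inj_on (\<lambda>z. insert z F\<^sub>0) (X - F\<^sub>0)"
    by (rule inj_onI) (metis Diff_iff insertCI insertE)
  moreover have "infinite (X - F\<^sub>0)"
    using assms(1,3) by (rule Diff_infinite_finite[rotated])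
  ultimately have "infinite ((\<lambda>z. insert z F\<^sub>0) ` (X - F\<^sub>0))"
    using finite_imageD by blast
  then have "\<not> (\<lambda>z. insert z F\<^sub>0) ` (X - F\<^sub>0) \<subseteq> \<E>"
    using assms(2) finite_subset by auto
  then obtain z where "z \<in> X - F\<^sub>0" "insert z F\<^sub>0 \<notin> \<E>"
    by (auto simp: image_subset_iff)
  then show ?thesis using that assms(3,4) by blast
qed

lemma traces_separate:
  assumes "infinite X" "finite T" "T \<subseteq> Pow X" "B \<subseteq> X" "B \<notin> T" "finite E"
  obtains y y' where "y \<in> traces X - E" "y' \<in> traces X - E"
    "\<forall>A\<in>T. trace_mem A y = trace_mem A y'" "trace_mem B y" "\<not> trace_mem B y'"
proof -
  have "\<exists>q. q \<in> (A - B) \<union> (B - A)" if "A \<in> T" for A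
  proof -
    have "A \<noteq> B" using that assms(5) by auto
    then show ?thesis by blast
  qed
  then obtain p where p: "\<And>A. A \<in> T \<Longrightarrow> p A \<in> (A - B) \<union> (B - A)"
    by metis
  have "p ` T \<subseteq> X" using p assms(3,4) by blast
  then obtain F where F: "finite F" "p ` T \<subseteq> F" "F \<subseteq> X" "F \<notin> fst ` E"
    by (rule finite_superset_avoiding[OF assms(1) finite_imageI[OF assms(6)] finite_imageI[OF assms(2)]])
  define y where "y = (F, insert (B \<inter> F) ((\<lambda>A. A \<inter> F) ` T))"
  define y' where "y' = (F, (\<lambda>A. A \<inter> F) ` T)"
  have "y \<in> traces X - E" "y' \<in> traces X - E"
    using F unfolding y_def y'_def traces_def by (force simp: image_iff)+
  moreover have "\<forall>A\<in>T. trace_mem A y = trace_mem A y'" "trace_mem B y"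
    unfolding trace_mem_def y_def y'_def by auto
  moreover have "\<not> trace_mem B y'"
  proof
    assume "trace_mem B y'"
    then obtain A where "A \<in> T" "B \<inter> F = A \<inter> F" unfolding trace_mem_def y'_def by auto
    then show False using p[of A] F(2) by blast
  qed
  ultimately show ?thesis using that by blast
qed

locale trace_embedding =
  fixes X :: "'a set" and h :: "'a set \<times> 'a set set \<Rightarrow> 'a"
  assumes infinite_X: "infinite X" and inj_h: "inj_on h (traces X)"
    and h_into: "h ` traces X \<subseteq> X"
begin

definition determined :: "'a set set \<Rightarrow> ('a set \<times> 'a set set) set \<Rightarrow> 'a set \<Rightarrow> bool" where
  "determined T E C \<longleftrightarrow> (\<forall>y\<in>traces X - E. \<forall>y'\<in>traces X - E.
      (\<forall>A\<in>T. trace_mem A y = trace_mem A y') \<longrightarrow> (h y \<in> C \<longleftrightarrow> h y' \<in> C))"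

definition trace_algebra :: "'a set set \<Rightarrow> 'a set set" where
  "trace_algebra \<S> = {C. C \<subseteq> X \<and> (\<exists>T E. finite T \<and> T \<subseteq> \<S> \<and> finite E \<and> determined T E C)}"

definition trace_code :: "'a set \<Rightarrow> 'a set" where
  "trace_code A = h ` {y \<in> traces X. trace_mem A y}"

lemma determined_mono:
  "determined T E C \<Longrightarrow> T \<subseteq> T' \<Longrightarrow> E \<subseteq> E' \<Longrightarrow> determined T' E' C"
  unfolding determined_def by blast

lemma determined_Un: "determined T E C \<Longrightarrow> determined T E D \<Longrightarrow> determined T E (C \<union> D)"
  unfolding determined_def by blast

lemma determined_Int: "determined T E C \<Longrightarrow> determined T E D \<Longrightarrow> determined T E (C \<inter> D)"
  unfolding determined_def by blast

lemma determined_Diff: "determined T E C \<Longrightarrow> determined T E (X - C)"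
  unfolding determined_def using h_into by blast

lemma trace_algebra_Un_Int:
  assumes "C \<in> trace_algebra \<S>" "D \<in> trace_algebra \<S>"
  shows "C \<union> D \<in> trace_algebra \<S> \<and> C \<inter> D \<in> trace_algebra \<S>"
proof -
  obtain T E T' E' where "C \<subseteq> X" "finite T" "T \<subseteq> \<S>" "finite E" "determined T E C"
    "D \<subseteq> X" "finite T'" "T' \<subseteq> \<S>" "finite E'" "determined T' E' D"
    using assms unfolding trace_algebra_def by blast
  then have "determined (T \<union> T') (E \<union> E') C" "determined (T \<union> T') (E \<union> E') D"
    by (auto elim: determined_mono)
  then show ?thesis
    using \<open>C \<subseteq> X\<close> \<open>D \<subseteq> X\<close> \<open>finite T\<close> \<open>finite T'\<close> \<open>T \<subseteq> \<S>\<close> \<open>T' \<subseteq> \<S>\<close> \<open>finite E\<close> \<open>finite E'\<close>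
    unfolding trace_algebra_def
    by (intro conjI CollectI exI[of _ "T \<union> T'"] exI[of _ "E \<union> E'"] determined_Un determined_Int)
      auto
qed

lemma trace_algebra_Diff: "C \<in> trace_algebra \<S> \<Longrightarrow> X - C \<in> trace_algebra \<S>"
  unfolding trace_algebra_def using determined_Diff by blast

lemma trace_algebra_empty: "{} \<in> trace_algebra \<S>"
  unfolding trace_algebra_def determined_def by blast

lemma trace_algebra_space: "X \<in> trace_algebra \<S>"
  using trace_algebra_Diff[OF trace_algebra_empty] by simp

lemma trace_algebra_singleton:
  assumes "x \<in> X"
  shows "{x} \<in> trace_algebra \<S>"
proof -
  have "finite (h -` {x} \<inter> traces X)"
    using finite_vimage_IntI[OF _ inj_h] by simp
  moreover have "determined {} (h -` {x} \<inter> traces X) {x}"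
    unfolding determined_def by blast
  ultimately show ?thesis unfolding trace_algebra_def using assms by blast
qed

lemma h_mem_trace_code: "y \<in> traces X \<Longrightarrow> h y \<in> trace_code A \<longleftrightarrow> trace_mem A y"
  unfolding trace_code_def using inj_h by (auto dest: inj_onD)

lemma trace_code_mem_trace_algebra: "A \<in> \<S> \<Longrightarrow> trace_code A \<in> trace_algebra \<S>"
  unfolding trace_algebra_def
proof (intro CollectI conjI exI)
  show "determined {A} {} (trace_code A)"
    unfolding determined_def using h_mem_trace_code by simp
  show "trace_code A \<subseteq> X" unfolding trace_code_def using h_into by blast
qed auto

lemma trace_code_not_mem_trace_algebra:
  assumes "\<S> \<subseteq> Pow X" "B \<subseteq> X" "B \<notin> \<S>"
  shows "trace_code B \<notin> trace_algebra \<S>"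
proof
  assume "trace_code B \<in> trace_algebra \<S>"
  then obtain T E where T: "finite T" "T \<subseteq> \<S>" and "finite E" "determined T E (trace_code B)"
    unfolding trace_algebra_def by blast
  obtain y y' where "y \<in> traces X - E" "y' \<in> traces X - E"
    "\<forall>A\<in>T. trace_mem A y = trace_mem A y'" "trace_mem B y" "\<not> trace_mem B y'"
    using traces_separate[OF infinite_X T(1) _ assms(2) _ \<open>finite E\<close>] T(2) assms(1,3) by blast
  then show False
    using \<open>determined T E (trace_code B)\<close> h_mem_trace_code unfolding determined_def by blast
qed

lemma inj_on_trace_algebra: "inj_on trace_algebra (Pow (Pow X))"
proof (rule inj_onI)
  have sub: "\<S> \<subseteq> \<S>'" if "\<S> \<in> Pow (Pow X)" "\<S>' \<in> Pow (Pow X)" "trace_algebra \<S> = trace_algebra \<S>'" for \<S> \<S>'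
  proof
    fix A assume "A \<in> \<S>"
    then have "trace_code A \<in> trace_algebra \<S>'"
      unfolding that(3)[symmetric] by (rule trace_code_mem_trace_algebra)
    then show "A \<in> \<S>'"
      using that(1,2) \<open>A \<in> \<S>\<close> trace_code_not_mem_trace_algebra[of \<S>' A] by blast
  qed
  fix \<S> \<S>' assume "\<S> \<in> Pow (Pow X)" "\<S>' \<in> Pow (Pow X)" "trace_algebra \<S> = trace_algebra \<S>'"
  then show "\<S> = \<S>'" using sub[of \<S> \<S>'] sub[of \<S>' \<S>] by (intro equalityI) simp_all
qed

definition trace_gt :: "'a set set \<Rightarrow> 'a set set set" where
  "trace_gt \<S> = essentially_finite_covers (trace_algebra \<S>)"

lemma trace_gt_properties:
  "generalized_topology X (trace_gt \<S>) \<and> small_gt (trace_gt \<S>)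
    \<and> weakly_normal_gt X (trace_gt \<S>) \<and> induced_topology (trace_gt \<S>) = discrete_topology X"
  unfolding trace_gt_def
proof (intro conjI)
  have sub: "trace_algebra \<S> \<subseteq> Pow X" unfolding trace_algebra_def by blast
  show "generalized_topology X (essentially_finite_covers (trace_algebra \<S>))"
    by (rule generalized_topology_essentially_finite_covers[OF sub trace_algebra_empty
          trace_algebra_space trace_algebra_Un_Int])
  show "small_gt (essentially_finite_covers (trace_algebra \<S>))"
    by (rule small_gt_essentially_finite_covers)
  show "weakly_normal_gt X (essentially_finite_covers (trace_algebra \<S>))"
    by (rule weakly_normal_gt_if_open_singletons_and_complements)
      (simp_all add: gt_Op_essentially_finite_covers trace_algebra_singleton trace_algebra_Diff)
  show "induced_topology (essentially_finite_covers (trace_algebra \<S>)) = discrete_topology X"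
    unfolding induced_topology_def gt_Op_essentially_finite_covers
    by (rule topology_generated_by_singletons[OF sub trace_algebra_space trace_algebra_singleton])
qed

lemma Pow_Pow_lepoll_discrete_weakly_normal_small_gts:
  "Pow (Pow X) \<lesssim> {Cov. generalized_topology X Cov \<and> small_gt Cov \<and> weakly_normal_gt X Cov
                       \<and> induced_topology Cov = discrete_topology X}"
  unfolding lepoll_def
proof (intro exI conjI)
  show "inj_on trace_gt (Pow (Pow X))"
    using inj_on_trace_algebra unfolding trace_gt_def inj_on_def
    by (metis gt_Op_essentially_finite_covers)
  show "trace_gt ` Pow (Pow X) \<subseteq> {Cov. generalized_topology X Cov \<and> small_gt Cov
      \<and> weakly_normal_gt X Cov \<and> induced_topology Cov = discrete_topology X}"
    using trace_gt_properties by auto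
qed

end

theorem theorem9p3:
  fixes X :: "'a set"
  assumes "infinite X"
  shows "{Cov. generalized_topology X Cov \<and> small_gt Cov \<and> weakly_normal_gt X Cov
                \<and> induced_topology Cov = discrete_topology X}
         \<approx> Pow (Pow X)"
proof (rule lepoll_antisym)
  show "{Cov. generalized_topology X Cov \<and> small_gt Cov \<and> weakly_normal_gt X Cov
                \<and> induced_topology Cov = discrete_topology X} \<lesssim> Pow (Pow X)"
    by (rule lepoll_trans[OF subset_imp_lepoll small_generalized_topologies_lepoll]) blast
  obtain h where "inj_on h (traces X)" "h ` traces X \<subseteq> X"
    using traces_lepoll[OF assms] unfolding lepoll_def by blast
  then interpret trace_embedding X h
    using assms by unfold_locales
  show "Pow (Pow X) \<lesssim> {Cov. generalized_topology X Cov \<and> small_gt Cov \<and> weakly_normal_gt X Cov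
                \<and> induced_topology Cov = discrete_topology X}"
    by (rule Pow_Pow_lepoll_discrete_weakly_normal_small_gts)
qed

end
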